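(* For $i=1,\dots,q$ let $\lambda_i$ be a partition of $k_i$ and let $G_i$ be a $\lambda_i$-choosable graph. Let $\lambda=\bigcup_{i=1}^q\lambda_i$ be the multiset union (a partition of $k_1+\dots+k_q$). Then the join $\vee_{i=1}^q G_i$ is $\lambda$-choosable. In particular, if each $G_i$ is $k_i$-choosable, then $\vee_{i=1}^qG_i$ is $\{k_1,\dots,k_q\}$-choosable.
   Context: A partition of a positive integer $k$ is a finite multiset of positive integers summing to $k$. For a partition $\lambda=\{k_1,\dots,k_q\}$ of $k$, a $\lambda$-assignment of a graph $G$ is an assignment $L$ of colour sets with $|L(v)|=k$ for all $v$ such that $\bigcup_{v}L(v)$ can be partitioned into sets $C_1,\dots,C_q$ with $|L(v)\cap C_i|=k_i$ for every vertex $v$ and every $i$; $G$ is $\lambda$-choosable if for every $\lambda$-assignment $L$ there is a proper colouring $f$ with $f(v)\in L(v)$ for all $v$. $\{k\}$-choosable coincides with $k$-choosable. The join $\vee_{i=1}^qG_i$ is obtained from the disjoint union of the $G_i$ by adding all edges between $V(G_i)$ and $V(G_j)$ for all $i\ne j$. *)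

theory Defs
  imports Main "HOL-Library.Multiset"
begin

definition simple_graph :: "'a set \<Rightarrow> ('a \<Rightarrow> 'a \<Rightarrow> bool) \<Rightarrow> bool" where
  "simple_graph V E \<longleftrightarrow> finite V \<and> (\<forall>u v. E u v \<longrightarrow> u \<in> V \<and> v \<in> V)
     \<and> (\<forall>u v. E u v \<longrightarrow> E v u) \<and> (\<forall>v. \<not> E v v)"

definition is_partition :: "nat multiset \<Rightarrow> nat \<Rightarrow> bool" where
  "is_partition lam k \<longleftrightarrow> (\<forall>x \<in># lam. 0 < x) \<and> sum_mset lam = k"

text \<open>A lam-assignment of a graph with vertex set V (colours are natural numbers):
 every list has size k = sum of parts, and the union of the lists can be partitioned
 into classes C_1..C_q, indexed along a list ks enumerating lam, with
 |L(v) \<inter> C_i| = k_i.\<close>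
definition lambda_assignment :: "'a set \<Rightarrow> nat multiset \<Rightarrow> ('a \<Rightarrow> nat set) \<Rightarrow> bool" where
  "lambda_assignment V lam L \<longleftrightarrow>
     (\<forall>v\<in>V. finite (L v) \<and> card (L v) = sum_mset lam) \<and>
     (\<exists>ks :: nat list. \<exists>Cs :: nat set list.
        mset ks = lam \<and> length Cs = length ks \<and>
        (\<forall>i<length Cs. \<forall>j<length Cs. i \<noteq> j \<longrightarrow> Cs ! i \<inter> Cs ! j = {}) \<and>
        \<Union> (set Cs) = (\<Union>v\<in>V. L v) \<and>
        (\<forall>v\<in>V. \<forall>i<length ks. card (L v \<inter> Cs ! i) = ks ! i))"

definition choosable :: "'a set \<Rightarrow> ('a \<Rightarrow> 'a \<Rightarrow> bool) \<Rightarrow> nat multiset \<Rightarrow> bool" where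
  "choosable V E lam \<longleftrightarrow>
     (\<forall>L. lambda_assignment V lam L \<longrightarrow>
        (\<exists>f. (\<forall>v\<in>V. f v \<in> L v) \<and> (\<forall>u\<in>V. \<forall>v\<in>V. E u v \<longrightarrow> f u \<noteq> f v)))"

definition join_V :: "nat \<Rightarrow> (nat \<Rightarrow> 'a set) \<Rightarrow> (nat \<times> 'a) set" where
  "join_V q V = {(i, v). i < q \<and> v \<in> V i}"

definition join_E :: "nat \<Rightarrow> (nat \<Rightarrow> 'a set) \<Rightarrow> (nat \<Rightarrow> 'a \<Rightarrow> 'a \<Rightarrow> bool)
    \<Rightarrow> nat \<times> 'a \<Rightarrow> nat \<times> 'a \<Rightarrow> bool" where
  "join_E q V E x y \<longleftrightarrow>
     (case (x, y) of ((i, u), (j, v)) \<Rightarrow>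
        (i = j \<and> i < q \<and> E i u v) \<or>
        (i \<noteq> j \<and> i < q \<and> j < q \<and> u \<in> V i \<and> v \<in> V j))"

end

theory Submission
  imports Defs
begin

text \<open>Let L be a \<lambda>-assignment of the join with colour classes C_1, \<dots>, C_m, where the class
  sizes enumerate \<lambda> = \<lambda>_1 + \<dots> + \<lambda>_q. Distribute the classes among the graphs so that the
  classes given to G_i have sizes \<lambda>_i. Cutting the lists of G_i down to the colours of its
  classes yields a \<lambda>_i-assignment of G_i, hence a proper colouring of G_i from these lists.
  Different G_i then use disjoint sets of colours, so together the colourings are proper on
  the join.\<close>

lemma mset_set_image_split:
  assumes "finite S" and "image_mset h (mset_set S) = A + B"
  obtains S\<^sub>1 S\<^sub>2 where "S = S\<^sub>1 \<union> S\<^sub>2" "S\<^sub>1 \<inter> S\<^sub>2 = {}"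
    "image_mset h (mset_set S\<^sub>1) = A" "image_mset h (mset_set S\<^sub>2) = B"
proof -
  obtain A' B' where AB: "mset_set S = A' + B'" "A = image_mset h A'" "B = image_mset h B'"
    using image_mset_eq_plusD[OF assms(2)] by blast
  have count_le: "count A' x + count B' x \<le> 1" for x
    using arg_cong[OF AB(1), of "\<lambda>M. count M x"] by (simp add: count_mset_set' split: if_splits)
  have counts: "count A' x = (if x \<in># A' then 1 else 0)" "count B' x = (if x \<in># B' then 1 else 0)" for x
    using count_le[of x] by (auto simp: not_in_iff simp flip: count_greater_zero_iff)
  then have "A' = mset_set (set_mset A')" "B' = mset_set (set_mset B')"
    by (auto intro!: multiset_eqI simp: count_mset_set')
  moreover have "set_mset A' \<inter> set_mset B' = {}"
  proof (intro equals0I)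
    fix x assume "x \<in> set_mset A' \<inter> set_mset B'"
    then show False
      using count_le[of x] counts[of x] by simp
  qed
  moreover have "S = set_mset A' \<union> set_mset B'"
    using arg_cong[OF AB(1), of set_mset] assms(1) by simp
  ultimately show thesis
    using that AB(2,3) by metis
qed

lemma mset_set_image_split_sum:
  fixes q :: nat
  assumes "finite S" and "image_mset h (mset_set S) = (\<Sum>i<q. A i)"
  shows "\<exists>T. (\<forall>i<q. T i \<subseteq> S) \<and> (\<forall>i<q. \<forall>j<q. i \<noteq> j \<longrightarrow> T i \<inter> T j = {}) \<and>
             (\<forall>i<q. image_mset h (mset_set (T i)) = A i)"
  using assms
proof (induction q arbitrary: S)
  case 0
  then show ?case by simp
next
  case (Suc q)
  obtain S\<^sub>1 S\<^sub>2 where S: "S = S\<^sub>1 \<union> S\<^sub>2" "S\<^sub>1 \<inter> S\<^sub>2 = {}"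
    "image_mset h (mset_set S\<^sub>1) = (\<Sum>i<q. A i)" "image_mset h (mset_set S\<^sub>2) = A q"
    using mset_set_image_split[OF Suc.prems(1), of h "\<Sum>i<q. A i" "A q"] Suc.prems(2) by auto
  obtain T where T: "\<forall>i<q. T i \<subseteq> S\<^sub>1" "\<forall>i<q. \<forall>j<q. i \<noteq> j \<longrightarrow> T i \<inter> T j = {}"
    "\<forall>i<q. image_mset h (mset_set (T i)) = A i"
    using Suc.IH[of S\<^sub>1] Suc.prems(1) S by auto
  show ?case
    by (rule exI[of _ "T(q := S\<^sub>2)"]) (use T S in \<open>auto simp: less_Suc_eq; blast\<close>)
qed

lemma card_Int_UN_disjoint:
  assumes "finite X" and "finite S" and "\<forall>a\<in>S. \<forall>b\<in>S. a \<noteq> b \<longrightarrow> C a \<inter> C b = {}"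
  shows "card (X \<inter> (\<Union>j\<in>S. C j)) = (\<Sum>j\<in>S. card (X \<inter> C j))"
proof -
  have "card (X \<inter> (\<Union>j\<in>S. C j)) = card (\<Union>j\<in>S. X \<inter> C j)"
    by (simp only: Int_UN_distrib)
  also have "\<dots> = (\<Sum>j\<in>S. card (X \<inter> C j))"
    using assms by (intro card_UN_disjoint) auto
  finally show ?thesis .
qed

lemma lambda_assignment_restrict_classes:
  assumes fin: "\<forall>v\<in>W. finite (L v)"
    and disj: "\<forall>i<length Cs. \<forall>j<length Cs. i \<noteq> j \<longrightarrow> Cs ! i \<inter> Cs ! j = {}"
    and len: "length ks = length Cs" and S: "S \<subseteq> {..<length Cs}"
    and card: "\<forall>v\<in>W. \<forall>j<length ks. card (L v \<inter> Cs ! j) = ks ! j"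
    and parts: "image_mset (nth ks) (mset_set S) = lam"
  shows "lambda_assignment W lam (\<lambda>v. L v \<inter> (\<Union>j\<in>S. Cs ! j))"
proof -
  define L' where "L' v = L v \<inter> (\<Union>j\<in>S. Cs ! j)" for v
  define J where "J = sorted_list_of_set S"
  define ks' where "ks' = map (nth ks) J"
  \<comment> \<open>The classes must cover exactly the union of the new lists, hence the intersection.\<close>
  define Cs' where "Cs' = map (\<lambda>j. Cs ! j \<inter> (\<Union>v\<in>W. L' v)) J"
  have "finite S"
    using S finite_subset by blast
  then have J: "distinct J" "set J = S"
    by (simp_all add: J_def)
  have card_L': "card (L' v) = sum_mset lam" if "v \<in> W" for v
  proof -
    have "card (L' v) = (\<Sum>j\<in>S. card (L v \<inter> Cs ! j))"
      unfolding L'_def using \<open>finite S\<close> fin disj S that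
      by (intro card_Int_UN_disjoint) auto
    also have "\<dots> = (\<Sum>j\<in>S. ks ! j)"
      using card S len that by (intro sum.cong) auto
    also have "\<dots> = sum_mset lam"
      using parts by (simp add: sum_unfold_sum_mset)
    finally show ?thesis .
  qed
  have mset_ks': "mset ks' = lam"
    using parts mset_set_set[OF J(1)] by (simp add: ks'_def J(2))
  have disjoint_Cs': "\<forall>a<length Cs'. \<forall>b<length Cs'. a \<noteq> b \<longrightarrow> Cs' ! a \<inter> Cs' ! b = {}"
  proof (intro allI impI)
    fix a b assume ab: "a < length Cs'" "b < length Cs'" "a \<noteq> b"
    then have "J ! a \<noteq> J ! b" "J ! a < length Cs" "J ! b < length Cs"
      using J S nth_mem by (fastforce simp: Cs'_def nth_eq_iff_index_eq)+
    then show "Cs' ! a \<inter> Cs' ! b = {}"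
      using disj ab by (auto simp: Cs'_def)
  qed
  have Union_Cs': "\<Union> (set Cs') = (\<Union>v\<in>W. L' v)"
    using J by (auto simp: Cs'_def L'_def)
  have card_Cs': "\<forall>v\<in>W. \<forall>t<length ks'. card (L' v \<inter> Cs' ! t) = ks' ! t"
  proof (intro ballI allI impI)
    fix v t assume v: "v \<in> W" and t: "t < length ks'"
    then have "J ! t \<in> S"
      using J nth_mem by (fastforce simp: ks'_def)
    then have "L' v \<inter> Cs' ! t = L v \<inter> Cs ! (J ! t)" "J ! t < length ks"
      using t v S len by (auto simp: Cs'_def ks'_def L'_def)
    then show "card (L' v \<inter> Cs' ! t) = ks' ! t"
      using card v t by (simp add: ks'_def)
  qed
  have "lambda_assignment W lam L'"
    unfolding lambda_assignment_def
  proof (intro conjI exI[of _ ks'] exI[of _ Cs'])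
    show "\<forall>v\<in>W. finite (L' v) \<and> card (L' v) = sum_mset lam"
      using fin card_L' by (simp add: L'_def)
    show "length Cs' = length ks'"
      by (simp add: Cs'_def ks'_def)
  qed (fact mset_ks' disjoint_Cs' Union_Cs' card_Cs')+
  then show ?thesis
    unfolding L'_def .
qed

lemma lambda_assignment_join_split:
  fixes q :: nat
  assumes "lambda_assignment (join_V q V) (\<Sum>i<q. lam i) L"
  obtains Ls where "\<forall>i<q. lambda_assignment (V i) (lam i) (Ls i)"
    and "\<forall>i<q. \<forall>v\<in>V i. Ls i v \<subseteq> L (i, v)"
    and "\<forall>i<q. \<forall>j<q. i \<noteq> j \<longrightarrow> (\<forall>u v. Ls i u \<inter> Ls j v = {})"
proof -
  have fin: "\<forall>x\<in>join_V q V. finite (L x)"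
    using assms by (simp add: lambda_assignment_def)
  obtain ks Cs where ks: "mset ks = (\<Sum>i<q. lam i)" and len: "length Cs = length ks"
    and disj: "\<forall>i<length Cs. \<forall>j<length Cs. i \<noteq> j \<longrightarrow> Cs ! i \<inter> Cs ! j = {}"
    and card: "\<forall>x\<in>join_V q V. \<forall>i<length ks. card (L x \<inter> Cs ! i) = ks ! i"
    using assms unfolding lambda_assignment_def by metis
  have "image_mset (nth ks) (mset_set {..<length ks}) = (\<Sum>i<q. lam i)"
    using ks by (metis map_nth mset_map mset_upt atLeast0LessThan)
  then obtain T where T_sub: "\<forall>i<q. T i \<subseteq> {..<length ks}"
    and T_disj: "\<forall>i<q. \<forall>j<q. i \<noteq> j \<longrightarrow> T i \<inter> T j = {}"
    and T_parts: "\<forall>i<q. image_mset (nth ks) (mset_set (T i)) = lam i"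
    using mset_set_image_split_sum[OF finite_lessThan] by metis
  define Ls where "Ls i v = L (i, v) \<inter> (\<Union>a\<in>T i. Cs ! a)" for i v
  show thesis
  proof (rule that)
    show "\<forall>i<q. lambda_assignment (V i) (lam i) (Ls i)"
    proof (intro allI impI)
      fix i assume "i < q"
      then have "(i, v) \<in> join_V q V" if "v \<in> V i" for v
        using that by (simp add: join_V_def)
      then show "lambda_assignment (V i) (lam i) (Ls i)"
        unfolding Ls_def using fin disj len T_sub T_parts card \<open>i < q\<close>
        by (intro lambda_assignment_restrict_classes) auto
    qed
    show "\<forall>i<q. \<forall>v\<in>V i. Ls i v \<subseteq> L (i, v)"
      by (auto simp: Ls_def)
    show "\<forall>i<q. \<forall>j<q. i \<noteq> j \<longrightarrow> (\<forall>u v. Ls i u \<inter> Ls j v = {})"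
    proof (intro allI impI)
      fix i j u v assume ij: "i < q" "j < q" "i \<noteq> j"
      have "Cs ! a \<inter> Cs ! b = {}" if "a \<in> T i" "b \<in> T j" for a b
        using that ij T_sub T_disj disj len by (metis disjoint_iff lessThan_iff subsetD)
      then show "Ls i u \<inter> Ls j v = {}"
        by (auto simp: Ls_def)
    qed
  qed
qed

definition list_colouring :: "'a set \<Rightarrow> ('a \<Rightarrow> 'a \<Rightarrow> bool) \<Rightarrow> ('a \<Rightarrow> nat set) \<Rightarrow> ('a \<Rightarrow> nat) \<Rightarrow> bool"
  where "list_colouring V E L f \<longleftrightarrow>
    (\<forall>v\<in>V. f v \<in> L v) \<and> (\<forall>u\<in>V. \<forall>v\<in>V. E u v \<longrightarrow> f u \<noteq> f v)"

lemma choosable_iff_list_colouring: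
  "choosable V E lam \<longleftrightarrow> (\<forall>L. lambda_assignment V lam L \<longrightarrow> (\<exists>f. list_colouring V E L f))"
  by (simp add: choosable_def list_colouring_def)

lemma list_colouring_join:
  assumes col: "\<forall>i<q. list_colouring (V i) (E i) (Ls i) (F i)"
    and sub: "\<forall>i<q. \<forall>v\<in>V i. Ls i v \<subseteq> L (i, v)"
    and disj: "\<forall>i<q. \<forall>j<q. i \<noteq> j \<longrightarrow> (\<forall>u v. Ls i u \<inter> Ls j v = {})"
  shows "list_colouring (join_V q V) (join_E q V E) L (\<lambda>(i, v). F i v)"
  unfolding list_colouring_def
proof (intro conjI ballI impI)
  fix x assume "x \<in> join_V q V"
  then obtain i v where x: "x = (i, v)" "i < q" "v \<in> V i"
    by (auto simp: join_V_def)
  then have "F i v \<in> Ls i v"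
    using col by (simp add: list_colouring_def)
  then show "(\<lambda>(i, v). F i v) x \<in> L x"
    using sub x by auto
next
  fix x y assume "x \<in> join_V q V" "y \<in> join_V q V" and edge: "join_E q V E x y"
  then obtain i u j v where xy: "x = (i, u)" "y = (j, v)" "i < q" "j < q" "u \<in> V i" "v \<in> V j"
    by (auto simp: join_V_def)
  show "(\<lambda>(i, v). F i v) x \<noteq> (\<lambda>(i, v). F i v) y"
  proof (cases "i = j")
    case True
    then show ?thesis
      using edge xy col by (auto simp: join_E_def list_colouring_def)
  next
    case False
    have "F i u \<in> Ls i u" "F j v \<in> Ls j v"
      using col xy by (auto simp: list_colouring_def)
    then show ?thesis
      using disj xy(1-4) False by fastforce
  qed
qed

lemma choosable_join:
  fixes q :: nat
  assumes "\<forall>i<q. choosable (V i) (E i) (lam i)"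
  shows "choosable (join_V q V) (join_E q V E) (\<Sum>i<q. lam i)"
  unfolding choosable_iff_list_colouring
proof (intro allI impI)
  fix L assume "lambda_assignment (join_V q V) (\<Sum>i<q. lam i) L"
  then obtain Ls where Ls: "\<forall>i<q. lambda_assignment (V i) (lam i) (Ls i)"
    "\<forall>i<q. \<forall>v\<in>V i. Ls i v \<subseteq> L (i, v)"
    "\<forall>i<q. \<forall>j<q. i \<noteq> j \<longrightarrow> (\<forall>u v. Ls i u \<inter> Ls j v = {})"
    by (rule lambda_assignment_join_split)
  have "\<forall>i<q. \<exists>f. list_colouring (V i) (E i) (Ls i) f"
    using assms Ls(1) unfolding choosable_iff_list_colouring by blast
  then obtain F where "\<forall>i<q. list_colouring (V i) (E i) (Ls i) (F i)"
    by metis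
  then show "\<exists>f. list_colouring (join_V q V) (join_E q V E) L f"
    using list_colouring_join Ls(2,3) by blast
qed

lemma is_partition_sum:
  fixes q :: nat
  assumes "\<forall>i<q. is_partition (lam i) (k i)"
  shows "is_partition (\<Sum>i<q. lam i) (\<Sum>i<q. k i)"
  using assms
proof (induction q)
  case 0
  then show ?case by (simp add: is_partition_def)
next
  case (Suc q)
  then have "is_partition (\<Sum>i<q. lam i) (\<Sum>i<q. k i)" "is_partition (lam q) (k q)"
    by simp_all
  then show ?case
    by (auto simp: is_partition_def)
qed

lemma sum_singletons_mset_map: "(\<Sum>i<q. {#k i#}) = mset (map k [0..<q])"
  by (induction q) auto

theorem lemma3:
  fixes q :: nat and V :: "nat \<Rightarrow> 'a set" and E :: "nat \<Rightarrow> 'a \<Rightarrow> 'a \<Rightarrow> bool"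
  assumes graphs: "\<forall>i<q. simple_graph (V i) (E i)"
  shows "(\<forall>(lam :: nat \<Rightarrow> nat multiset) (k :: nat \<Rightarrow> nat).
            (\<forall>i<q. is_partition (lam i) (k i) \<and> choosable (V i) (E i) (lam i)) \<longrightarrow>
              is_partition (\<Sum>i<q. lam i) (\<Sum>i<q. k i) \<and>
              choosable (join_V q V) (join_E q V E) (\<Sum>i<q. lam i))
       \<and> (\<forall>k :: nat \<Rightarrow> nat.
            (\<forall>i<q. 0 < k i \<and> choosable (V i) (E i) {#k i#}) \<longrightarrow>
              choosable (join_V q V) (join_E q V E) (mset (map k [0..<q])))"
proof (rule conjI; intro allI impI)
  fix lam :: "nat \<Rightarrow> nat multiset" and k :: "nat \<Rightarrow> nat"
  assume "\<forall>i<q. is_partition (lam i) (k i) \<and> choosable (V i) (E i) (lam i)"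
  then show "is_partition (\<Sum>i<q. lam i) (\<Sum>i<q. k i) \<and>
      choosable (join_V q V) (join_E q V E) (\<Sum>i<q. lam i)"
    by (simp add: is_partition_sum choosable_join)
next
  fix k :: "nat \<Rightarrow> nat"
  assume "\<forall>i<q. 0 < k i \<and> choosable (V i) (E i) {#k i#}"
  then have "choosable (join_V q V) (join_E q V E) (\<Sum>i<q. {#k i#})"
    by (simp add: choosable_join)
  then show "choosable (join_V q V) (join_E q V E) (mset (map k [0..<q]))"
    by (simp only: sum_singletons_mset_map)
qed

end
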